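(* Let $A \in \mathbb{R}^{n\times d}$, $b \in \mathbb{R}^n$. Let $w$ be a random variable in $\mathbb{R}^n$ and let $\mathcal{N}(w) = \mathrm{span}\lbrace z \in \mathbb{R}^d : \mathbb{P}[z'A'w = 0]=1\rbrace$, $\mathcal{R}(w) = \mathcal{N}(w)^\perp$. Let $w_0, w_1, \ldots$ be random variables in $\mathbb{R}^n$ (on the same probability space) with $\mathbb{P}[A'w_l \in \mathcal{R}(w)] = 1$ for all $l \geq 0$, and let $T = \min\lbrace k \geq 0 : \mathrm{span}\lbrace A'w_0,\ldots,A'w_k\rbrace \supset \mathcal{R}(w)\rbrace$. Let $x_0 \in \mathbb{R}^d$ be arbitrary, $S_0 = I_d$, and for $l \geq 0$ $$x_{l+1} = \begin{cases} x_l + \dfrac{S_l A' w_l w_l'(b - A x_l)}{w_l' A S_l A' w_l} & S_l A'w_l \neq 0,\\ x_l & \text{otherwise,}\end{cases}\qquad S_{l+1} = \begin{cases} S_l - \dfrac{S_l A' w_l w_l' A S_l}{w_l' A S_l A' w_l} & S_l A' w_l \neq 0,\\ S_l & \text{otherwise.}\end{cases}$$ Then, almost surely on the event $\lbrace T < \infty\rbrace$: (1) for every $s \geq T+1$, $S_{T+1} = S_s$ and $x_{T+1} = x_s$; (2) if $Ax = b$ admits a solution $x^*$ (not necessarily unique), then $x_{T+1} = P_{\mathcal{N}(w)} x_0 + P_{\mathcal{R}(w)} x^*$.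
   Context: $P_W$ denotes the orthogonal projection matrix onto a subspace $W \subset \mathbb{R}^d$; $A'$ is the transpose of $A$. *)

theory Defs
  imports "HOL-Probability.Probability"
begin

definition orth_proj :: "('a::euclidean_space) set \<Rightarrow> 'a \<Rightarrow> 'a" where
  "orth_proj W x = (THE y. y \<in> W \<and> (\<forall>z\<in>W. orthogonal (x - y) z))"

definition orth_comp :: "('a::real_inner) set \<Rightarrow> 'a set" where
  "orth_comp W = {y. \<forall>z\<in>W. orthogonal y z}"

definition nullsp :: "'a measure \<Rightarrow> real^'d^'n \<Rightarrow> ('a \<Rightarrow> real^'n) \<Rightarrow> (real^'d) set" where
  "nullsp M A w = span {z. measure M {\<omega> \<in> space M. z \<bullet> (transpose A *v w \<omega>) = 0} = 1}"

definition rowsp :: "'a measure \<Rightarrow> real^'d^'n \<Rightarrow> ('a \<Rightarrow> real^'n) \<Rightarrow> (real^'d) set" where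
  "rowsp M A w = orth_comp (nullsp M A w)"

definition covers :: "'a measure \<Rightarrow> real^'d^'n \<Rightarrow> ('a \<Rightarrow> real^'n) \<Rightarrow> (nat \<Rightarrow> 'a \<Rightarrow> real^'n) \<Rightarrow> 'a \<Rightarrow> nat \<Rightarrow> bool" where
  "covers M A w ws \<omega> k \<longleftrightarrow> rowsp M A w \<subseteq> span ((\<lambda>i. transpose A *v ws i \<omega>) ` {..k})"

text \<open>Stopping time T (meaningful on the event that some k satisfies covers).\<close>
definition stopT :: "'a measure \<Rightarrow> real^'d^'n \<Rightarrow> ('a \<Rightarrow> real^'n) \<Rightarrow> (nat \<Rightarrow> 'a \<Rightarrow> real^'n) \<Rightarrow> 'a \<Rightarrow> nat" where
  "stopT M A w ws \<omega> = (LEAST k. covers M A w ws \<omega> k)"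

definition outer :: "real^'d \<Rightarrow> real^'d \<Rightarrow> real^'d^'d" where
  "outer u v = (\<chi> i j. u $ i * v $ j)"

fun iter :: "real^'d^'n \<Rightarrow> real^'n \<Rightarrow> real^'d \<Rightarrow> (nat \<Rightarrow> real^'n) \<Rightarrow> nat \<Rightarrow> (real^'d) \<times> (real^'d^'d)" where
  "iter A b x0 ws 0 = (x0, mat 1)"
| "iter A b x0 ws (Suc l) =
     (let (x, S) = iter A b x0 ws l;
          v = transpose A *v ws l;
          u = S *v v;
          den = ws l \<bullet> (A *v u)
      in if u \<noteq> 0
         then (x + ((ws l \<bullet> (b - A *v x)) / den) *\<^sub>R u,
               S - (1 / den) *\<^sub>R outer u (v v* S))
         else (x, S))"

end

theory Submission
  imports Defs
begin

text \<open>
  By induction on \<open>l\<close>, \<open>S\<^sub>l\<close> is the matrix of the orthogonal projection onto the orthogonal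
  complement of \<open>V\<^sub>l = span {A'w\<^sub>0, \<dots>, A'w\<^sub>l\<^sub>-\<^sub>1}\<close>: the update subtracts the rank-one
  projection onto \<open>S\<^sub>l A'w\<^sub>l\<close>, which is the component of \<open>A'w\<^sub>l\<close> orthogonal to \<open>V\<^sub>l\<close>.
  If \<open>A x\<^sup>* = b\<close>, the step size \<open>w\<^sub>l'(b - A x\<^sub>l) = (A'w\<^sub>l)'(x\<^sup>* - x\<^sub>l)\<close> makes
  \<open>x\<^sub>l = x\<^sup>* + S\<^sub>l (x\<^sub>0 - x\<^sup>*)\<close> an invariant as well.
  Almost surely all \<open>A'w\<^sub>l\<close> lie in \<open>R(w)\<close>, so \<open>V\<^sub>T\<^sub>+\<^sub>1 = R(w)\<close> on \<open>{T < \<infinity>}\<close>. From then on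
  \<open>S\<^sub>l A'w\<^sub>l = 0\<close>, so the iteration is stationary, and \<open>S\<^sub>T\<^sub>+\<^sub>1 = P\<^bsub>N(w)\<^esub>\<close> yields
  \<open>x\<^sub>T\<^sub>+\<^sub>1 = x\<^sup>* + P\<^bsub>N(w)\<^esub> (x\<^sub>0 - x\<^sup>*) = P\<^bsub>N(w)\<^esub> x\<^sub>0 + P\<^bsub>R(w)\<^esub> x\<^sup>*\<close>.
\<close>

lemma orth_comp_eq_orthogonal_comp: "orth_comp W = W\<^sup>\<bottom>"
  by (auto simp: orth_comp_def orthogonal_comp_def orthogonal_commute)

lemma orthogonal_comp_span: "(span X)\<^sup>\<bottom> = X\<^sup>\<bottom>"
proof
  show "(span X)\<^sup>\<bottom> \<subseteq> X\<^sup>\<bottom>"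
    by (rule orthogonal_comp_anti_mono) (rule span_superset)
  show "X\<^sup>\<bottom> \<subseteq> (span X)\<^sup>\<bottom>"
    unfolding orthogonal_comp_def
    using orthogonal_to_span by (fastforce simp: orthogonal_commute)
qed

lemma orth_proj_eqI:
  assumes W: "subspace W" and p: "p \<in> W" and orth: "\<And>z. z \<in> W \<Longrightarrow> orthogonal (y - p) z"
  shows "orth_proj W y = p"
  unfolding orth_proj_def
proof (rule the_equality)
  show "p \<in> W \<and> (\<forall>z\<in>W. orthogonal (y - p) z)"
    using p orth by blast
next
  fix q assume q: "q \<in> W \<and> (\<forall>z\<in>W. orthogonal (y - q) z)"
  have "p - q \<in> W"
    using W p q by (simp add: subspace_diff)
  then have "orthogonal (y - q) (p - q)" "orthogonal (y - p) (p - q)"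
    using q orth by auto
  then have "(p - q) \<bullet> (p - q) = 0"
    by (simp add: orthogonal_def inner_diff_left)
  then show "q = p" by simp
qed

definition perp_projector :: "real^'d^'d \<Rightarrow> (real^'d) set \<Rightarrow> bool" where
  "perp_projector S V \<longleftrightarrow> (\<forall>y. S *v y \<in> V\<^sup>\<bottom> \<and> y - S *v y \<in> V)"

lemma perp_projector_orthogonal:
  assumes "perp_projector S V"
  shows "(u - S *v u) \<bullet> (S *v y) = 0"
  using assms unfolding perp_projector_def orthogonal_comp_def orthogonal_def by blast

lemma perp_projector_symmetric:
  assumes "perp_projector S V"
  shows "u \<bullet> (S *v y) = (S *v u) \<bullet> y"
proof -
  have "u \<bullet> (S *v y) = (S *v u) \<bullet> (S *v y)" "y \<bullet> (S *v u) = (S *v y) \<bullet> (S *v u)"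
    using perp_projector_orthogonal[OF assms, of u y] perp_projector_orthogonal[OF assms, of y u]
    by (simp_all add: inner_diff_left)
  then show ?thesis
    by (simp add: inner_commute)
qed

lemma perp_projector_vanishes:
  assumes P: "perp_projector S V" and V: "subspace V" and z: "z \<in> V"
  shows "S *v z = 0"
proof -
  have "z - (z - S *v z) \<in> V"
    using P V z unfolding perp_projector_def by (blast intro: subspace_diff)
  then show ?thesis
    using P V orthogonal_Int_0 unfolding perp_projector_def by fastforce
qed

lemma orth_proj_comp_eq_perp_projector:
  assumes P: "perp_projector S V"
  shows "orth_proj (V\<^sup>\<bottom>) y = S *v y"
proof (rule orth_proj_eqI[OF subspace_orthogonal_comp])
  show "S *v y \<in> V\<^sup>\<bottom>"
    using P unfolding perp_projector_def by blast
  show "orthogonal (y - S *v y) z" if "z \<in> V\<^sup>\<bottom>" for z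
    using P that unfolding perp_projector_def orthogonal_comp_def by (blast intro: orthogonal_commute)
qed

lemma orth_proj_eq_diff_perp_projector:
  assumes P: "perp_projector S V" and V: "subspace V"
  shows "orth_proj V y = y - S *v y"
proof (rule orth_proj_eqI[OF V])
  show "y - S *v y \<in> V"
    using P unfolding perp_projector_def by blast
  show "orthogonal (y - (y - S *v y)) z" if "z \<in> V" for z
    using P that unfolding perp_projector_def orthogonal_comp_def by (simp add: orthogonal_commute)
qed

definition proj_update :: "real^'d^'d \<Rightarrow> real^'d \<Rightarrow> real^'d^'d" where
  "proj_update S v = S - (1 / (v \<bullet> (S *v v))) *\<^sub>R outer (S *v v) (v v* S)"

lemma outer_mult_vector: "outer u p *v y = (p \<bullet> y) *\<^sub>R u"
  by (simp add: vec_eq_iff outer_def matrix_vector_mult_def inner_vec_def sum_distrib_left ac_simps)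

lemma proj_update_mult_vector:
  assumes "perp_projector S V"
  shows "proj_update S v *v y = S *v y - ((S *v v) \<bullet> y / (v \<bullet> (S *v v))) *\<^sub>R (S *v v)"
proof -
  have "(v v* S) \<bullet> y = (S *v v) \<bullet> y"
    using dot_lmul_matrix perp_projector_symmetric[OF assms] by metis
  then show ?thesis
    by (simp add: proj_update_def matrix_vector_mult_diff_rdistrib outer_mult_vector
        scaleR_matrix_vector_assoc[symmetric])
qed

lemma perp_projector_proj_update:
  assumes P: "perp_projector S (span X)" and nz: "S *v v \<noteq> 0"
  shows "perp_projector (proj_update S v) (span (insert v X))"
proof -
  define u where "u = S *v v"
  define d where "d = v \<bullet> u"
  have "d = u \<bullet> u"
    using perp_projector_orthogonal[OF P, of v v] by (simp add: d_def u_def inner_diff_left)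
  then have "d \<noteq> 0"
    using nz by (simp add: u_def)
  have update: "proj_update S v *v y = S *v y - (u \<bullet> y / d) *\<^sub>R u" for y
    using proj_update_mult_vector[OF P] by (simp add: u_def d_def)
  have in_span: "span X \<subseteq> span (insert v X)"
    by (rule span_mono) blast
  show ?thesis
    unfolding perp_projector_def update
  proof (intro allI conjI)
    fix y
    have Sy: "S *v y \<in> X\<^sup>\<bottom>" and u: "u \<in> X\<^sup>\<bottom>"
      using P by (auto simp: perp_projector_def orthogonal_comp_span u_def)
    have "v \<bullet> (S *v y) = u \<bullet> y"
      using perp_projector_symmetric[OF P] by (simp add: u_def)
    then have "v \<bullet> (S *v y - (u \<bullet> y / d) *\<^sub>R u) = 0"
      using \<open>d \<noteq> 0\<close> by (simp add: inner_diff_right d_def inner_commute)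
    with Sy u show "S *v y - (u \<bullet> y / d) *\<^sub>R u \<in> (span (insert v X))\<^sup>\<bottom>"
      unfolding orthogonal_comp_span
      by (auto simp: orthogonal_comp_def orthogonal_def inner_diff_right)
    have "v - u \<in> span (insert v X)"
      using P in_span by (auto simp: perp_projector_def u_def)
    then have "u \<in> span (insert v X)"
      using span_diff[OF span_base[of v "insert v X"]] by fastforce
    moreover have "y - S *v y \<in> span (insert v X)"
      using P in_span by (auto simp: perp_projector_def)
    ultimately have "(y - S *v y) + (u \<bullet> y / d) *\<^sub>R u \<in> span (insert v X)"
      by (intro span_add span_scale)
    then show "y - (S *v y - (u \<bullet> y / d) *\<^sub>R u) \<in> span (insert v X)"
      by (simp add: algebra_simps)
  qed
qed

lemma iter_Suc_stuck:
  assumes "iter A b x0 ws l = (x, S)" and "S *v (transpose A *v ws l) = 0"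
  shows "iter A b x0 ws (Suc l) = (x, S)"
  using assms by simp

lemma iter_Suc_update:
  assumes "iter A b x0 ws l = (x, S)" and "S *v v \<noteq> 0" and "v = transpose A *v ws l"
  shows "iter A b x0 ws (Suc l) =
    (x + (ws l \<bullet> (b - A *v x) / (v \<bullet> (S *v v))) *\<^sub>R (S *v v), proj_update S v)"
  using assms by (simp add: Let_def proj_update_def dot_lmul_matrix)

lemma iter_perp_projector:
  "perp_projector (snd (iter A b x0 ws l)) (span ((\<lambda>i. transpose A *v ws i) ` {..<l}))"
proof (induction l)
  case 0
  show ?case by (simp add: perp_projector_def)
next
  case (Suc l)
  obtain x S where xS: "iter A b x0 ws l = (x, S)"
    by (metis prod.exhaust)
  define v where "v = transpose A *v ws l"
  define X where "X = (\<lambda>i. transpose A *v ws i) ` {..<l}"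
  have P: "perp_projector S (span X)"
    using Suc xS by (simp add: X_def)
  have X_Suc: "(\<lambda>i. transpose A *v ws i) ` {..<Suc l} = insert v X"
    by (auto simp: X_def v_def lessThan_Suc)
  show ?case
  proof (cases "S *v v = 0")
    case True
    then have "span (insert v X) = span X"
      using P unfolding perp_projector_def by (metis diff_zero span_redundant)
    then show ?thesis
      using iter_Suc_stuck[OF xS True[unfolded v_def]] P X_Suc by simp
  next
    case False
    then show ?thesis
      using iter_Suc_update[OF xS False v_def] perp_projector_proj_update[OF P False] X_Suc
      by simp
  qed
qed

lemma iter_fst_eq_solution_add_snd:
  assumes sol: "A *v xs = b"
  shows "fst (iter A b x0 ws l) = xs + snd (iter A b x0 ws l) *v (x0 - xs)"
proof (induction l)
  case 0
  show ?case by simp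
next
  case (Suc l)
  obtain x S where xS: "iter A b x0 ws l = (x, S)"
    by (metis prod.exhaust)
  define v where "v = transpose A *v ws l"
  have P: "perp_projector S (span ((\<lambda>i. transpose A *v ws i) ` {..<l}))"
    using iter_perp_projector[of A b x0 ws l] xS by simp
  have IH: "x = xs + S *v (x0 - xs)"
    using Suc xS by simp
  show ?case
  proof (cases "S *v v = 0")
    case True
    then show ?thesis
      using iter_Suc_stuck[OF xS] IH by (simp add: v_def)
  next
    case False
    define u where "u = S *v v"
    define d where "d = v \<bullet> u"
    have "ws l \<bullet> (b - A *v x) = v \<bullet> (xs - x)"
      using sol by (simp add: v_def dot_lmul_matrix matrix_vector_mult_diff_distrib)
    also have "\<dots> = - (u \<bullet> (x0 - xs))"
      using IH perp_projector_symmetric[OF P] by (simp add: u_def inner_minus_right)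
    finally have step_size: "ws l \<bullet> (b - A *v x) = - (u \<bullet> (x0 - xs))" .
    have "fst (iter A b x0 ws (Suc l)) = x + (ws l \<bullet> (b - A *v x) / d) *\<^sub>R u"
      using iter_Suc_update[OF xS False v_def] by (simp add: u_def d_def)
    also have "\<dots> = xs + (S *v (x0 - xs) - (u \<bullet> (x0 - xs) / d) *\<^sub>R u)"
      unfolding step_size divide_minus_left scaleR_minus_left by (subst IH) simp
    also have "\<dots> = xs + snd (iter A b x0 ws (Suc l)) *v (x0 - xs)"
      using iter_Suc_update[OF xS False v_def] proj_update_mult_vector[OF P]
      by (simp add: u_def d_def)
    finally show ?thesis .
  qed
qed

lemma iter_eq_if_spanned:
  assumes "m \<le> s"
    and "\<And>j. m \<le> j \<Longrightarrow> transpose A *v ws j \<in> span ((\<lambda>i. transpose A *v ws i) ` {..<m})"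
  shows "iter A b x0 ws s = iter A b x0 ws m"
  using assms(1)
proof (induction s rule: dec_induct)
  case base
  show ?case by simp
next
  case (step s)
  obtain x S where xS: "iter A b x0 ws m = (x, S)"
    by (metis prod.exhaust)
  have "perp_projector S (span ((\<lambda>i. transpose A *v ws i) ` {..<m}))"
    using iter_perp_projector[of A b x0 ws m] xS by simp
  then have "S *v (transpose A *v ws s) = 0"
    using perp_projector_vanishes subspace_span assms(2) step.hyps(1) by blast
  then show ?case
    using iter_Suc_stuck[of A b x0 ws s x S] step xS by simp
qed

lemma iter_fst_orth_proj:
  assumes N: "subspace N" and span: "span ((\<lambda>i. transpose A *v ws i) ` {..<m}) = N\<^sup>\<bottom>"
    and sol: "A *v xs = b"
  shows "fst (iter A b x0 ws m) = orth_proj N x0 + orth_proj (N\<^sup>\<bottom>) xs"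
proof -
  define S where "S = snd (iter A b x0 ws m)"
  have P: "perp_projector S (N\<^sup>\<bottom>)"
    using iter_perp_projector[of A b x0 ws m] span by (simp add: S_def)
  have "fst (iter A b x0 ws m) = xs + S *v (x0 - xs)"
    using iter_fst_eq_solution_add_snd[OF sol] by (simp add: S_def)
  also have "\<dots> = S *v x0 + (xs - S *v xs)"
    by (simp add: matrix_vector_mult_diff_distrib)
  also have "\<dots> = orth_proj N x0 + orth_proj (N\<^sup>\<bottom>) xs"
    using orth_proj_comp_eq_perp_projector[OF P] orth_proj_eq_diff_perp_projector[OF P subspace_orthogonal_comp]
      orthogonal_comp_self[OF N]
    by simp
  finally show ?thesis .
qed

lemma AE_all_of_measure_eq_1:
  assumes "prob_space M" and "\<And>l::nat. measure M {\<omega> \<in> space M. P l \<omega>} = 1"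
  shows "AE \<omega> in M. \<forall>l. P l \<omega>"
proof -
  interpret prob_space M by (rule assms(1))
  have "AE \<omega> in M. P l \<omega>" for l
    using AE_prob_1[OF assms(2)[of l]] by (rule AE_mp) simp
  then show ?thesis
    by (simp add: AE_all_countable)
qed

lemma span_upto_stopT_eq_rowsp:
  assumes "\<exists>k. covers M A w ws \<omega> k" and "\<And>l. transpose A *v ws l \<omega> \<in> rowsp M A w"
  shows "span ((\<lambda>i. transpose A *v ws i \<omega>) ` {..<stopT M A w ws \<omega> + 1}) = rowsp M A w"
proof
  have "covers M A w ws \<omega> (stopT M A w ws \<omega>)"
    unfolding stopT_def using assms(1) by (rule LeastI_ex)
  then show "rowsp M A w \<subseteq> span ((\<lambda>i. transpose A *v ws i \<omega>) ` {..<stopT M A w ws \<omega> + 1})"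
    by (simp add: covers_def lessThan_Suc_atMost)
  show "span ((\<lambda>i. transpose A *v ws i \<omega>) ` {..<stopT M A w ws \<omega> + 1}) \<subseteq> rowsp M A w"
    using assms(2) unfolding rowsp_def orth_comp_eq_orthogonal_comp
    by (intro span_minimal subspace_orthogonal_comp) auto
qed

lemma iter_after_stopT:
  assumes covers: "\<exists>k. covers M A w ws \<omega> k"
    and in_rowsp: "\<forall>l. transpose A *v ws l \<omega> \<in> rowsp M A w"
  shows "(\<forall>s \<ge> stopT M A w ws \<omega> + 1.
            iter A b x0 (\<lambda>l. ws l \<omega>) (stopT M A w ws \<omega> + 1) = iter A b x0 (\<lambda>l. ws l \<omega>) s) \<and>
         (\<forall>xs. A *v xs = b \<longrightarrow>
            fst (iter A b x0 (\<lambda>l. ws l \<omega>) (stopT M A w ws \<omega> + 1))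
              = orth_proj (nullsp M A w) x0 + orth_proj (rowsp M A w) xs)"
proof -
  have rowsp: "rowsp M A w = (nullsp M A w)\<^sup>\<bottom>"
    by (simp add: rowsp_def orth_comp_eq_orthogonal_comp)
  have nullsp: "subspace (nullsp M A w)"
    by (simp add: nullsp_def subspace_span)
  define T where "T = stopT M A w ws \<omega>"
  have span: "span ((\<lambda>i. transpose A *v ws i \<omega>) ` {..<T + 1}) = (nullsp M A w)\<^sup>\<bottom>"
    using span_upto_stopT_eq_rowsp[OF covers] in_rowsp by (simp add: T_def flip: rowsp)
  have "iter A b x0 (\<lambda>l. ws l \<omega>) (T + 1) = iter A b x0 (\<lambda>l. ws l \<omega>) s" if "T + 1 \<le> s" for s
    by (rule sym, rule iter_eq_if_spanned[OF that]) (use in_rowsp span in \<open>simp add: rowsp\<close>)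
  moreover have "fst (iter A b x0 (\<lambda>l. ws l \<omega>) (T + 1))
      = orth_proj (nullsp M A w) x0 + orth_proj (rowsp M A w) xs" if "A *v xs = b" for xs
    unfolding rowsp by (rule iter_fst_orth_proj[OF nullsp span that])
  ultimately show ?thesis
    unfolding T_def by blast
qed

theorem mainTheorem5:
  fixes M :: "'a measure"
    and A :: "real^'d^'n" and b :: "real^'n"
    and w :: "'a \<Rightarrow> real^'n"
    and ws :: "nat \<Rightarrow> 'a \<Rightarrow> real^'n"
    and x0 :: "real^'d"
  assumes "prob_space M"
    and "w \<in> borel_measurable M"
    and "\<And>l. ws l \<in> borel_measurable M"
    and "\<And>l. measure M {\<omega> \<in> space M. transpose A *v ws l \<omega> \<in> rowsp M A w} = 1"
  shows "AE \<omega> in M. (\<exists>k. covers M A w ws \<omega> k) \<longrightarrow>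
           ((\<forall>s \<ge> stopT M A w ws \<omega> + 1.
               iter A b x0 (\<lambda>l. ws l \<omega>) (stopT M A w ws \<omega> + 1) = iter A b x0 (\<lambda>l. ws l \<omega>) s) \<and>
            (\<forall>xs. A *v xs = b \<longrightarrow>
               fst (iter A b x0 (\<lambda>l. ws l \<omega>) (stopT M A w ws \<omega> + 1))
                 = orth_proj (nullsp M A w) x0 + orth_proj (rowsp M A w) xs))"
proof -
  have "AE \<omega> in M. \<forall>l. transpose A *v ws l \<omega> \<in> rowsp M A w"
    using AE_all_of_measure_eq_1 assms(1,4) .
  then show ?thesis
    by eventually_elim (metis iter_after_stopT)
qed

end
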